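(* Let $(\Delta,\mathfrak o,m,q)$ be a quantized Brauer graph such that $\Delta$ contains no loops. Then there exist a finite abelian group $G$ and a Brauer weighting $W:\mathcal Z_\Delta\to G$ of $(\Delta,\mathfrak o,m,q)$ such that the graph $\Delta_W$ of the quantized Brauer covering graph $(\Delta_W,\mathfrak o_W,m_W,q_W)$ has no multiple edges, i.e. no two distinct edges of $\Delta_W$ have the same pair of endpoints.
   Context: Brauer graphs. A Brauer graph $(\Delta,\mathfrak o,m)$ is a finite connected graph $\Delta$ (loops and multiple edges allowed) with vertex set $\Delta_0$, edge set $\Delta_1$ and at least one edge, together with a multiplicity function $m:\Delta_0\to\mathbb Z_{\ge 1}$ and, for each vertex $\mu$, a cyclic ordering $\mathfrak o$ of the edges incident with $\mu$. A loop at $\mu$ occurs twice in the cyclic ordering at $\mu$; its two occurrences are regarded as two distinct elements of $\Delta_1$ (each with its own successor). Edge $j$ is the successor of edge $i$ at $\mu$ if $j$ immediately follows $i$ in the cyclic ordering at $\mu$. The valency $\operatorname{val}(\mu)$ is the number of edges incident with $\mu$, loops counted twice; if $\operatorname{val}(\mu)=1$ the unique edge at $\mu$ is its own successor. An edge $i$ is truncated at its endpoint $\mu$ if $\operatorname{val}(\mu)=1$ and $m(\mu)=1$. Fix a field $K$. A quantized Brauer graph $(\Delta,\mathfrak o,m,q)$ is a Brauer graph with a function $q:\mathcal X_\Delta\to K\setminus\{0\}$, $(i,\mu)\mapsto q_{i,\mu}$, where $\mathcal X_\Delta$ is the set of pairs $(i,\mu)$ with $\mu$ an endpoint of $i$ and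 $i$ not truncated at either of its endpoints. Successor weightings. Let $G$ be a finite abelian group. For $\mu\in\Delta_0$ let $\mathcal Z_\mu$ be the set of pairs $(i,j)$ of edges with $j$ the successor of $i$ at $\mu$, and $\mathcal Z_\Delta=\bigsqcup_{\mu\in\Delta_0}\mathcal Z_\mu$ (disjoint union). A successor weighting is a function $W:\mathcal Z_\Delta\to G$. Put $\omega_\mu=\prod_{(i,j)\in\mathcal Z_\mu}W(i,j)$, let $\operatorname{ord}(\mu)$ be the order of $\omega_\mu$ in $G$, and $H_\mu=\langle\omega_\mu\rangle$. $W$ is a Brauer weighting if $\operatorname{ord}(\mu)$ divides $m(\mu)$ for all $\mu\in\Delta_0$. For each $\mu$, $\sim$ is the equivalence relation on the set of pairs $(i,H_\mu g)$ ($i$ incident with $\mu$, $g\in G$) generated by $(i,H_\mu g)\sim(j,H_\mu gW(i,j))$ whenever $j$ is the successor of $i$ at $\mu$; the class of $(i,H_\mu g)$ is $[i,H_\mu g]$, and $\mathcal D_\mu$ is the set of classes. Brauer covering graph. The graph $\Delta_W$ has vertices $\mu_d$ ($\mu\in\Delta_0$, $d\in\mathcal D_\mu$) and edges $i_g$ ($i\in\Delta_1$, $g\in G$). If $i$ has endpoints $\mu$ and $\nu$, then $i_g$ has endpoints $\mu_{[i,H_\mu g]}$ and $\nu_{[i,H_\nu g]}$; if $i$ is a loop at $\mu$ with its two occurrences $i,\hat i$, then $i_g$ has endpoints $\mu_{[i,H_\mu g]}$ and $\mu_{[\hat i,H_\mu g]}$. The cyclic ordering $\mathfrak o_W$ is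 defined by: if $j$ is the successor of $i$ at $\mu$, then $j_{gW(i,j)}$ is the successor of $i_g$ at $\mu_{[i,H_\mu g]}$. For a Brauer weighting, $m_W(\mu_d)=m(\mu)/\operatorname{ord}(\mu)$; $(\Delta_W,\mathfrak o_W,m_W)$ is the Brauer covering graph. Given a quantizing function $q$ on $\Delta$, $q_W(i_g,\mu_d)=q_{i,\mu}$, and $(\Delta_W,\mathfrak o_W,m_W,q_W)$ is the quantized Brauer covering graph. *)

theory Defs
  imports "HOL-Algebra.Algebra" "HOL-Library.Multiset"
begin

text \<open>Brauer graphs are encoded by half-edges (edge occurrences at a vertex):
  V vertices, E edges, Hf half-edges, vert h the vertex at which the occurrence h sits,
  edge h the edge it belongs to, nxt h the occurrence following h in the cyclic
  ordering at vert h.  Each edge has exactly two occurrences (a loop has two occurrences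
  at the same vertex).\<close>

definition adj_rel :: "'h set \<Rightarrow> ('h \<Rightarrow> 'v) \<Rightarrow> ('h \<Rightarrow> 'e) \<Rightarrow> ('v \<times> 'v) set" where
  "adj_rel Hf vert edge = {(vert h, vert h') | h h'. h \<in> Hf \<and> h' \<in> Hf \<and> edge h = edge h'}"

definition brauer_graph ::
  "'v set \<Rightarrow> 'e set \<Rightarrow> 'h set \<Rightarrow> ('h \<Rightarrow> 'v) \<Rightarrow> ('h \<Rightarrow> 'e) \<Rightarrow> ('h \<Rightarrow> 'h) \<Rightarrow> ('v \<Rightarrow> nat) \<Rightarrow> bool" where
  "brauer_graph V E Hf vert edge nxt m \<longleftrightarrow>
     finite V \<and> finite E \<and> finite Hf \<and> E \<noteq> {} \<and>
     vert ` Hf \<subseteq> V \<and> edge ` Hf = E \<and>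
     (\<forall>e\<in>E. card {h\<in>Hf. edge h = e} = 2) \<and>
     bij_betw nxt Hf Hf \<and>
     (\<forall>h\<in>Hf. vert (nxt h) = vert h) \<and>
     (\<forall>h\<in>Hf. \<forall>h'\<in>Hf. vert h = vert h' \<longrightarrow> (\<exists>n. (nxt ^^ n) h = h')) \<and>
     (\<forall>u\<in>V. \<forall>w\<in>V. (u, w) \<in> (adj_rel Hf vert edge)\<^sup>*) \<and>
     (\<forall>v\<in>V. m v \<ge> 1)"

definition no_loops :: "'h set \<Rightarrow> ('h \<Rightarrow> 'v) \<Rightarrow> ('h \<Rightarrow> 'e) \<Rightarrow> bool" where
  "no_loops Hf vert edge \<longleftrightarrow>
     (\<forall>h\<in>Hf. \<forall>h'\<in>Hf. edge h = edge h' \<and> h \<noteq> h' \<longrightarrow> vert h \<noteq> vert h')"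

definition valency :: "'h set \<Rightarrow> ('h \<Rightarrow> 'v) \<Rightarrow> 'v \<Rightarrow> nat" where
  "valency Hf vert \<mu> = card {h\<in>Hf. vert h = \<mu>}"

definition truncated_at :: "'h set \<Rightarrow> ('h \<Rightarrow> 'v) \<Rightarrow> ('v \<Rightarrow> nat) \<Rightarrow> 'v \<Rightarrow> bool" where
  "truncated_at Hf vert m \<mu> \<longleftrightarrow> valency Hf vert \<mu> = 1 \<and> m \<mu> = 1"

definition quant_domain :: "'h set \<Rightarrow> ('h \<Rightarrow> 'v) \<Rightarrow> ('h \<Rightarrow> 'e) \<Rightarrow> ('v \<Rightarrow> nat) \<Rightarrow> ('e \<times> 'v) set" where
  "quant_domain Hf vert edge m =
     {(edge h, vert h) | h. h \<in> Hf \<and>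
        (\<forall>h'\<in>Hf. edge h' = edge h \<longrightarrow> \<not> truncated_at Hf vert m (vert h'))}"

definition quantized_brauer_graph ::
  "'v set \<Rightarrow> 'e set \<Rightarrow> 'h set \<Rightarrow> ('h \<Rightarrow> 'v) \<Rightarrow> ('h \<Rightarrow> 'e) \<Rightarrow> ('h \<Rightarrow> 'h) \<Rightarrow> ('v \<Rightarrow> nat)
     \<Rightarrow> ('e \<Rightarrow> 'v \<Rightarrow> 'k::field) \<Rightarrow> bool" where
  "quantized_brauer_graph V E Hf vert edge nxt m q \<longleftrightarrow>
     brauer_graph V E Hf vert edge nxt m \<and>
     (\<forall>(i, \<mu>) \<in> quant_domain Hf vert edge m. q i \<mu> \<noteq> 0)"

text \<open>Successor weightings: a pair (i,j) in Z_mu with j the successor of i at mu is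
  represented by the occurrence h of i at mu (so that j = edge (nxt h)); hence
  a successor weighting is a function W on half-edges.\<close>

definition omega :: "('g, 'x) monoid_scheme \<Rightarrow> 'h set \<Rightarrow> ('h \<Rightarrow> 'v) \<Rightarrow> ('h \<Rightarrow> 'g) \<Rightarrow> 'v \<Rightarrow> 'g" where
  "omega G Hf vert W \<mu> = finprod G W {h\<in>Hf. vert h = \<mu>}"

definition Hsub :: "('g, 'x) monoid_scheme \<Rightarrow> 'h set \<Rightarrow> ('h \<Rightarrow> 'v) \<Rightarrow> ('h \<Rightarrow> 'g) \<Rightarrow> 'v \<Rightarrow> 'g set" where
  "Hsub G Hf vert W \<mu> = generate G {omega G Hf vert W \<mu>}"

definition successor_weighting :: "('g, 'x) monoid_scheme \<Rightarrow> 'h set \<Rightarrow> ('h \<Rightarrow> 'g) \<Rightarrow> bool" where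
  "successor_weighting G Hf W \<longleftrightarrow> (\<forall>h\<in>Hf. W h \<in> carrier G)"

definition brauer_weighting ::
  "('g, 'x) monoid_scheme \<Rightarrow> 'v set \<Rightarrow> 'h set \<Rightarrow> ('h \<Rightarrow> 'v) \<Rightarrow> ('v \<Rightarrow> nat) \<Rightarrow> ('h \<Rightarrow> 'g) \<Rightarrow> bool" where
  "brauer_weighting G V Hf vert m W \<longleftrightarrow>
     successor_weighting G Hf W \<and>
     (\<forall>\<mu>\<in>V. group.ord G (omega G Hf vert W \<mu>) dvd m \<mu>)"

definition cov_step ::
  "('g, 'x) monoid_scheme \<Rightarrow> 'h set \<Rightarrow> ('h \<Rightarrow> 'v) \<Rightarrow> ('h \<Rightarrow> 'h) \<Rightarrow> ('h \<Rightarrow> 'g) \<Rightarrow> 'v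
     \<Rightarrow> (('h \<times> 'g set) \<times> ('h \<times> 'g set)) set" where
  "cov_step G Hf vert nxt W \<mu> =
     {((h, r_coset G (Hsub G Hf vert W \<mu>) g),
       (nxt h, r_coset G (Hsub G Hf vert W \<mu>) (g \<otimes>\<^bsub>G\<^esub> W h))) | h g.
        h \<in> Hf \<and> vert h = \<mu> \<and> g \<in> carrier G}"

definition cov_class ::
  "('g, 'x) monoid_scheme \<Rightarrow> 'h set \<Rightarrow> ('h \<Rightarrow> 'v) \<Rightarrow> ('h \<Rightarrow> 'h) \<Rightarrow> ('h \<Rightarrow> 'g) \<Rightarrow> 'h \<Rightarrow> 'g
     \<Rightarrow> ('h \<times> 'g set) set" where
  "cov_class G Hf vert nxt W h g =
     (let R = cov_step G Hf vert nxt W (vert h) in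
      (R \<union> R\<inverse>)\<^sup>* `` {(h, r_coset G (Hsub G Hf vert W (vert h)) g)})"

text \<open>Endpoints (as a multiset of vertices mu_d of Delta_W) of the edge i_g of Delta_W.\<close>
definition cov_endpoints ::
  "('g, 'x) monoid_scheme \<Rightarrow> 'h set \<Rightarrow> ('h \<Rightarrow> 'v) \<Rightarrow> ('h \<Rightarrow> 'e) \<Rightarrow> ('h \<Rightarrow> 'h) \<Rightarrow> ('h \<Rightarrow> 'g)
     \<Rightarrow> 'e \<Rightarrow> 'g \<Rightarrow> ('v \<times> ('h \<times> 'g set) set) multiset" where
  "cov_endpoints G Hf vert edge nxt W i g =
     image_mset (\<lambda>h. (vert h, cov_class G Hf vert nxt W h g)) (mset_set {h\<in>Hf. edge h = i})"

definition cov_no_multiple_edges ::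
  "('g, 'x) monoid_scheme \<Rightarrow> 'e set \<Rightarrow> 'h set \<Rightarrow> ('h \<Rightarrow> 'v) \<Rightarrow> ('h \<Rightarrow> 'e) \<Rightarrow> ('h \<Rightarrow> 'h)
     \<Rightarrow> ('h \<Rightarrow> 'g) \<Rightarrow> bool" where
  "cov_no_multiple_edges G E Hf vert edge nxt W \<longleftrightarrow>
     inj_on (\<lambda>(i, g). cov_endpoints G Hf vert edge nxt W i g) (E \<times> carrier G)"

end

theory Submission imports Defs begin

(* Take G = Z/N with N = 2n + 1, where n is the number of half-edges, and
   make W a "coboundary": W(h) = p(succ h) - p(h) for a potential p on half-edges.
   Around every vertex the products telescope, so omega_mu = 0, H_mu is trivial and W is
   a Brauer weighting for any multiplicities.  Moreover the value g - p(h) (mod N) is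
   invariant under the generating steps of ~, so the class [h, g] determines g - p(h).
   If edges i_g and i'_g' of Delta_W have the same endpoints, matching the two
   half-edges of i with those of i' shows that p(h1) - p(h2) and p(a) - p(b) agree mod N.
   We choose p so that these differences are +-(label of the edge) with distinct labels
   in 1..n (one half-edge of each edge gets its label, the other 0); since N = 2n + 1
   such signed labels are distinct mod N, whence i = i', and then g = g' (no loops
   ensures the matching of half-edges is the identity). *)

definition ZN :: "nat \<Rightarrow> nat monoid" where
  "ZN N = \<lparr>carrier = {..<N}, monoid.mult = (\<lambda>x y. (x + y) mod N), one = 0\<rparr>"

lemma ZN_simps [simp]:
  "carrier (ZN N) = {..<N}" "monoid.mult (ZN N) x y = (x + y) mod N" "one (ZN N) = 0"
  by (simp_all add: ZN_def)

lemma ZN_comm_group: assumes "N > 0" shows "comm_group (ZN N)"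
proof (rule comm_groupI)
  fix x assume "x \<in> carrier (ZN N)"
  then show "\<exists>y\<in>carrier (ZN N). y \<otimes>\<^bsub>ZN N\<^esub> x = \<one>\<^bsub>ZN N\<^esub>"
    by (intro bexI[of _ "(N - x) mod N"]) (auto simp: mod_add_left_eq assms)
qed (auto simp: assms mod_add_left_eq mod_add_right_eq ac_simps)

lemma ZN_finprod:
  assumes "N > 0" "finite S" "\<And>x. x \<in> S \<Longrightarrow> f x < N"
  shows "finprod (ZN N) f S = (\<Sum>x\<in>S. f x) mod N"
  using assms(2,3)
proof (induction S rule: finite_induct)
  case empty
  interpret comm_group "ZN N" using ZN_comm_group[OF assms(1)] .
  show ?case by simp
next
  case (insert a F)
  interpret comm_group "ZN N" using ZN_comm_group[OF assms(1)] .
  have "finprod (ZN N) f (insert a F) = f a \<otimes>\<^bsub>ZN N\<^esub> finprod (ZN N) f F"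
    using insert by (intro finprod_insert) auto
  then show ?case using insert by (simp add: mod_add_right_eq)
qed

definition potential_weighting :: "nat \<Rightarrow> ('h \<Rightarrow> nat) \<Rightarrow> ('h \<Rightarrow> 'h) \<Rightarrow> 'h \<Rightarrow> nat" where
  "potential_weighting N p nxt h = (p (nxt h) + (N - p h)) mod N"

text \<open>A successor map that permutes the half-edges and preserves their vertex permutes
  the half-edges at each single vertex; this is what makes the products telescope.\<close>
lemma successor_permutes_vertex:
  assumes bij: "bij_betw nxt Hf Hf" and vn: "\<And>h. h \<in> Hf \<Longrightarrow> vert (nxt h) = vert h"
  shows "bij_betw nxt {h\<in>Hf. vert h = \<mu>} {h\<in>Hf. vert h = \<mu>}"
proof -
  let ?S = "{h\<in>Hf. vert h = \<mu>}"
  have "inj_on nxt ?S" using bij by (auto simp: bij_betw_def intro: inj_on_subset)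
  moreover have "nxt ` ?S = ?S"
  proof
    show "nxt ` ?S \<subseteq> ?S" using bij vn by (auto simp: bij_betw_def)
    show "?S \<subseteq> nxt ` ?S"
    proof
      fix x assume x: "x \<in> ?S"
      then obtain y where "y \<in> Hf" "x = nxt y" using bij by (auto simp: bij_betw_def)
      then show "x \<in> nxt ` ?S" using x vn by auto
    qed
  qed
  ultimately show ?thesis by (simp add: bij_betw_def)
qed

lemma potential_weighting_omega:
  assumes N: "N > 0" and fin: "finite Hf" and bij: "bij_betw nxt Hf Hf"
    and vn: "\<And>h. h \<in> Hf \<Longrightarrow> vert (nxt h) = vert h" and pN: "\<And>h. h \<in> Hf \<Longrightarrow> p h \<le> N"
  shows "omega (ZN N) Hf vert (potential_weighting N p nxt) \<mu> = 0"
proof -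
  define S where "S = {h\<in>Hf. vert h = \<mu>}"
  have "omega (ZN N) Hf vert (potential_weighting N p nxt) \<mu>
      = (\<Sum>h\<in>S. potential_weighting N p nxt h) mod N"
    unfolding omega_def S_def[symmetric]
    using fin N by (intro ZN_finprod) (auto simp: S_def potential_weighting_def)
  also have "\<dots> = ((\<Sum>h\<in>S. p (nxt h)) + (\<Sum>h\<in>S. N - p h)) mod N"
    by (simp add: potential_weighting_def mod_sum_eq sum.distrib)
  also have "(\<Sum>h\<in>S. p (nxt h)) = (\<Sum>h\<in>S. p h)"
    using sum.reindex_bij_betw[OF successor_permutes_vertex[where vert=vert, OF bij vn], of p] by (simp add: S_def)
  also have "(\<Sum>h\<in>S. p h) + (\<Sum>h\<in>S. N - p h) = (\<Sum>h\<in>S. N)"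
    unfolding sum.distrib[symmetric] using pN by (intro sum.cong) (auto simp: S_def)
  finally show ?thesis by simp
qed

lemma potential_weighting_cosets:
  assumes "N > 0" "finite Hf" "bij_betw nxt Hf Hf"
    "\<And>h. h \<in> Hf \<Longrightarrow> vert (nxt h) = vert h" "\<And>h. h \<in> Hf \<Longrightarrow> p h \<le> N"
  shows "r_coset (ZN N) (Hsub (ZN N) Hf vert (potential_weighting N p nxt) \<mu>) g = {g mod N}"
proof -
  interpret comm_group "ZN N" using ZN_comm_group[OF assms(1)] .
  have "Hsub (ZN N) Hf vert (potential_weighting N p nxt) \<mu> = {0}"
    using potential_weighting_omega[where vert=vert and p=p, OF assms] generate_one
    by (simp add: Hsub_def)
  then show ?thesis by (simp add: r_coset_def)
qed

lemma potential_weighting_brauer: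
  assumes "N > 0" "finite Hf" "bij_betw nxt Hf Hf"
    "\<And>h. h \<in> Hf \<Longrightarrow> vert (nxt h) = vert h" "\<And>h. h \<in> Hf \<Longrightarrow> p h \<le> N"
  shows "brauer_weighting (ZN N) V Hf vert m (potential_weighting N p nxt)"
proof -
  interpret comm_group "ZN N" using ZN_comm_group[OF assms(1)] .
  show ?thesis
    using assms(1) ord_id potential_weighting_omega[where vert=vert and p=p, OF assms]
    by (simp add: brauer_weighting_def successor_weighting_def potential_weighting_def)
qed

definition shifted_coset :: "nat \<Rightarrow> ('h \<Rightarrow> nat) \<Rightarrow> 'h \<times> nat set \<Rightarrow> int set" where
  "shifted_coset N p x = (\<lambda>g. (int g - int (p (fst x))) mod int N) ` snd x"

lemma shifted_coset_singleton [simp]: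
  "shifted_coset N p (h, {g mod N}) = {(int g - int (p h)) mod int N}"
  by (simp add: shifted_coset_def zmod_int mod_diff_left_eq)

lemma cov_step_preserves_shift:
  assumes "N > 0" "finite Hf" "bij_betw nxt Hf Hf"
    "\<And>h. h \<in> Hf \<Longrightarrow> vert (nxt h) = vert h" "\<And>h. h \<in> Hf \<Longrightarrow> p h \<le> N"
    and step: "(x, y) \<in> cov_step (ZN N) Hf vert nxt (potential_weighting N p nxt) \<mu>"
  shows "shifted_coset N p x = shifted_coset N p y"
proof -
  note cosets = potential_weighting_cosets[where vert=vert and p=p, OF assms(1-5)]
  from step obtain h g where h: "h \<in> Hf"
    and xy: "x = (h, {g mod N})"
      "y = (nxt h, {(g + potential_weighting N p nxt h) mod N})"
    by (auto simp: cov_step_def cosets)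
  have "int (potential_weighting N p nxt h) = (int (p (nxt h)) + (int N - int (p h))) mod int N"
    using assms(5)[OF h] by (simp add: potential_weighting_def zmod_int of_nat_diff add_diff_eq)
  then have "(int (g + potential_weighting N p nxt h) - int (p (nxt h))) mod int N
      = (int g + (int (p (nxt h)) + (int N - int (p h))) - int (p (nxt h))) mod int N"
    by (metis of_nat_add mod_add_right_eq mod_diff_left_eq)
  also have "\<dots> = (int g - int (p h) + int N) mod int N" by (simp add: algebra_simps)
  also have "\<dots> = (int g - int (p h)) mod int N" by (rule mod_add_self2)
  finally show ?thesis by (simp add: xy)
qed

lemma cov_class_determines_shift:
  assumes "N > 0" "finite Hf" "bij_betw nxt Hf Hf"
    "\<And>h. h \<in> Hf \<Longrightarrow> vert (nxt h) = vert h" "\<And>h. h \<in> Hf \<Longrightarrow> p h \<le> N"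
    and vh: "vert h = vert h'"
    and cls: "cov_class (ZN N) Hf vert nxt (potential_weighting N p nxt) h g
            = cov_class (ZN N) Hf vert nxt (potential_weighting N p nxt) h' g'"
  shows "(int g - int (p h)) mod int N = (int g' - int (p h')) mod int N"
proof -
  note cosets = potential_weighting_cosets[where vert=vert and p=p, OF assms(1-5)]
  let ?R = "cov_step (ZN N) Hf vert nxt (potential_weighting N p nxt) (vert h)"
  have "(h', {g' mod N}) \<in> cov_class (ZN N) Hf vert nxt (potential_weighting N p nxt) h' g'"
    by (simp add: cov_class_def Let_def cosets)
  then have "(h', {g' mod N}) \<in> cov_class (ZN N) Hf vert nxt (potential_weighting N p nxt) h g"
    using cls by simp
  then have "((h, {g mod N}), (h', {g' mod N})) \<in> (?R \<union> ?R\<inverse>)\<^sup>*"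
    by (simp add: cov_class_def Let_def cosets)
  then have "shifted_coset N p (h, {g mod N}) = shifted_coset N p (h', {g' mod N})"
  proof (induction rule: rtrancl_induct)
    case (step y z)
    then show ?case using cov_step_preserves_shift[where vert=vert and p=p, OF assms(1-5)] by blast
  qed simp
  then show ?thesis by simp
qed

lemma cov_endpoints_halves:
  assumes "{h\<in>Hf. edge h = i} = {h1, h2}" "h1 \<noteq> h2"
  shows "cov_endpoints G Hf vert edge nxt W i g =
    {#(vert h1, cov_class G Hf vert nxt W h1 g), (vert h2, cov_class G Hf vert nxt W h2 g)#}"
  using assms by (simp add: cov_endpoints_def)

lemma two_element_mset_match:
  assumes "{#F h1, F h2#} = {#F' k1, F' k2#}"
  obtains a b where "{a, b} = {k1, k2}" "F' a = F h1" "F' b = F h2"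
proof -
  have "F h1 = F' k1 \<and> F h2 = F' k2 \<or> F h1 = F' k2 \<and> F h2 = F' k1"
    using assms by (auto simp: add_eq_conv_ex)
  then show thesis using that[of k1 k2] that[of k2 k1] by (auto simp: insert_commute)
qed

definition head_potential :: "'h set \<Rightarrow> ('h \<Rightarrow> 'e) \<Rightarrow> ('h \<Rightarrow> nat) \<Rightarrow> 'h \<Rightarrow> nat" where
  "head_potential Hf edge f h =
     (if \<forall>h'\<in>Hf. edge h' = edge h \<longrightarrow> f h \<le> f h' then f h + 1 else 0)"

lemma head_potential_difference:
  assumes inj: "inj_on f Hf" and halves: "{h\<in>Hf. edge h = i} = {h1, h2}" and "h1 \<noteq> h2"
  shows "\<exists>r\<in>{h1, h2}. int (head_potential Hf edge f h1) - int (head_potential Hf edge f h2)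
                         \<in> {int (f r) + 1, - (int (f r) + 1)}"
proof -
  have h12: "h1 \<in> Hf" "h2 \<in> Hf" "edge h1 = i" "edge h2 = i" using halves by blast+
  have fne: "f h1 \<noteq> f h2" using inj h12 \<open>h1 \<noteq> h2\<close> by (meson inj_on_eq_iff)
  have "(\<forall>h'\<in>Hf. edge h' = edge h \<longrightarrow> f h \<le> f h') \<longleftrightarrow> (\<forall>h'\<in>{h1, h2}. f h \<le> f h')"
    if "edge h = i" for h
    using halves that by blast
  then have "head_potential Hf edge f h1 = (if f h1 < f h2 then f h1 + 1 else 0)"
    "head_potential Hf edge f h2 = (if f h2 < f h1 then f h2 + 1 else 0)"
    using h12 fne by (auto simp: head_potential_def)
  then show ?thesis using fne by (cases "f h1 < f h2") auto
qed

lemma signed_labels_distinct_mod: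
  fixes x y A B :: int
  assumes "x \<in> {A, -A}" "y \<in> {B, -B}" "1 \<le> A" "A \<le> n" "1 \<le> B" "B \<le> n"
    and "x mod (2 * n + 1) = y mod (2 * n + 1)"
  shows "A = B"
proof -
  obtain k where k: "x - y = (2 * n + 1) * k"
    using assms(7) by (metis dvdE mod_eq_dvd_iff)
  have "k = 0"
  proof (rule ccontr)
    assume "k \<noteq> 0"
    have pos: "0 < 2 * n + 1" using assms(3,4) by simp
    then have "(2 * n + 1) * 1 \<le> (2 * n + 1) * \<bar>k\<bar>"
      using \<open>k \<noteq> 0\<close> by (intro mult_left_mono) auto
    also have "\<dots> = \<bar>x - y\<bar>" using k pos by (simp add: abs_mult)
    also have "\<dots> \<le> 2 * n" using assms(1-6) by auto
    finally show False by simp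
  qed
  then show ?thesis using k assms(1-6) by auto
qed

lemma head_potential_separates_edges:
  assumes inj: "inj_on f Hf" and fn: "\<And>h. h \<in> Hf \<Longrightarrow> f h < n" and N: "N = 2 * n + 1"
    and H: "{h\<in>Hf. edge h = i} = {h1, h2}" "h1 \<noteq> h2"
    and K: "{h\<in>Hf. edge h = i'} = {k1, k2}" "k1 \<noteq> k2"
    and jumps: "(int (head_potential Hf edge f h1) - int (head_potential Hf edge f h2)) mod int N
              = (int (head_potential Hf edge f k1) - int (head_potential Hf edge f k2)) mod int N"
  shows "i = i'"
proof -
  obtain r1 where r1: "r1 \<in> {h1, h2}"
    "int (head_potential Hf edge f h1) - int (head_potential Hf edge f h2)
       \<in> {int (f r1) + 1, - (int (f r1) + 1)}"
    using head_potential_difference[OF inj H] by blast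
  obtain r2 where r2: "r2 \<in> {k1, k2}"
    "int (head_potential Hf edge f k1) - int (head_potential Hf edge f k2)
       \<in> {int (f r2) + 1, - (int (f r2) + 1)}"
    using head_potential_difference[OF inj K] by blast
  have r12: "r1 \<in> {h\<in>Hf. edge h = i}" "r2 \<in> {h\<in>Hf. edge h = i'}"
    using r1(1) r2(1) unfolding H(1) K(1) .
  have "(int (head_potential Hf edge f h1) - int (head_potential Hf edge f h2)) mod (2 * int n + 1)
      = (int (head_potential Hf edge f k1) - int (head_potential Hf edge f k2)) mod (2 * int n + 1)"
    using jumps N by (simp add: add.commute)
  then have "int (f r1) + 1 = int (f r2) + 1"
    using r12 fn by (intro signed_labels_distinct_mod[where n="int n", OF r1(2) r2(2)]) force+
  then have "r1 = r2" using inj r12 by (simp add: inj_on_eq_iff)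
  then show ?thesis using r12 by simp
qed

lemma head_potential_no_multiple_edges:
  assumes bg: "brauer_graph V E Hf vert edge nxt m" and nl: "no_loops Hf vert edge"
    and inj: "inj_on f Hf" and fn: "\<And>h. h \<in> Hf \<Longrightarrow> f h < n" and N: "N = 2 * n + 1"
  shows "cov_no_multiple_edges (ZN N) E Hf vert edge nxt
           (potential_weighting N (head_potential Hf edge f) nxt)"
proof -
  let ?p = "head_potential Hf edge f"
  let ?C = "cov_class (ZN N) Hf vert nxt (potential_weighting N ?p nxt)"
  have pN: "?p h \<le> N" if "h \<in> Hf" for h using fn[OF that] N by (simp add: head_potential_def)
  have graph: "finite Hf" "bij_betw nxt Hf Hf" "\<And>h. h \<in> Hf \<Longrightarrow> vert (nxt h) = vert h"
    using bg by (auto simp: brauer_graph_def)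
  note shift = cov_class_determines_shift[where vert=vert and p="?p", OF _ graph pN]
  have halves: "\<exists>h1 h2. {h\<in>Hf. edge h = i} = {h1, h2} \<and> h1 \<noteq> h2" if "i \<in> E" for i
    using bg that by (simp add: brauer_graph_def card_2_iff)
  show ?thesis unfolding cov_no_multiple_edges_def
  proof (rule inj_onI, clarify)
    fix i g i' g'
    assume iE: "i \<in> E" "i' \<in> E" and gN: "g \<in> carrier (ZN N)" "g' \<in> carrier (ZN N)"
      and eq: "cov_endpoints (ZN N) Hf vert edge nxt (potential_weighting N ?p nxt) i g
             = cov_endpoints (ZN N) Hf vert edge nxt (potential_weighting N ?p nxt) i' g'"
    obtain h1 h2 where H: "{h\<in>Hf. edge h = i} = {h1, h2}" "h1 \<noteq> h2" using halves iE by blast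
    obtain k1 k2 where K: "{h\<in>Hf. edge h = i'} = {k1, k2}" "k1 \<noteq> k2" using halves iE by blast
    obtain a b where ab: "{a, b} = {k1, k2}" "vert a = vert h1" "?C a g' = ?C h1 g"
      "vert b = vert h2" "?C b g' = ?C h2 g"
      using eq unfolding cov_endpoints_halves[OF H] cov_endpoints_halves[OF K]
      by (rule two_element_mset_match) auto
    have Kab: "{h\<in>Hf. edge h = i'} = {a, b}" "a \<noteq> b" using K ab(1) by auto
    have e1: "(int g - int (?p h1)) mod int N = (int g' - int (?p a)) mod int N"
      using shift[of h1 a g g'] ab(2,3) N by simp
    have e2: "(int g - int (?p h2)) mod int N = (int g' - int (?p b)) mod int N"
      using shift[of h2 b g g'] ab(4,5) N by simp
    have "(int (?p h1) - int (?p h2)) mod int N = (int (?p a) - int (?p b)) mod int N"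
      using arg_cong2[OF e2 e1, of "\<lambda>u v. (u - v) mod int N"] by (simp add: mod_diff_eq)
    then have same_edge: "i = i'"
      using head_potential_separates_edges[OF inj fn N H Kab] by blast
    have "h1 \<in> {h\<in>Hf. edge h = i}" "h2 \<in> {h\<in>Hf. edge h = i}" unfolding H(1) by simp_all
    then have "vert h1 \<noteq> vert h2" using nl H(2) by (auto simp: no_loops_def)
    then have "a = h1" using ab(2) Kab(1) H(1) same_edge by auto
    then have "int g mod int N = int g' mod int N"
      using e1 by (metis mod_diff_eq diff_add_cancel mod_add_left_eq)
    then have "g = g'" using gN by simp
    with same_edge show "i = i' \<and> g = g'" by simp
  qed
qed

theorem proposition6p6:
  fixes V :: "'v set" and E :: "'e set" and Hf :: "'h set"
    and vert :: "'h \<Rightarrow> 'v" and edge :: "'h \<Rightarrow> 'e" and nxt :: "'h \<Rightarrow> 'h"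
    and m :: "'v \<Rightarrow> nat" and q :: "'e \<Rightarrow> 'v \<Rightarrow> 'k::field"
  assumes "quantized_brauer_graph V E Hf vert edge nxt m q"
    and "no_loops Hf vert edge"
  shows "\<exists>(G :: nat monoid) (W :: 'h \<Rightarrow> nat).
           comm_group G \<and> finite (carrier G) \<and>
           brauer_weighting G V Hf vert m W \<and>
           cov_no_multiple_edges G E Hf vert edge nxt W"
proof -
  have bg: "brauer_graph V E Hf vert edge nxt m"
    using assms(1) by (simp add: quantized_brauer_graph_def)
  then have fin: "finite Hf" and graph: "bij_betw nxt Hf Hf" "\<And>h. h \<in> Hf \<Longrightarrow> vert (nxt h) = vert h"
    by (auto simp: brauer_graph_def)
  obtain f where f: "bij_betw f Hf {0..<card Hf}" using ex_bij_betw_finite_nat[OF fin] by blast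
  then have inj: "inj_on f Hf" and fn: "\<And>h. h \<in> Hf \<Longrightarrow> f h < card Hf"
    by (auto simp: bij_betw_def)
  define N where "N = 2 * card Hf + 1"
  define W where "W = potential_weighting N (head_potential Hf edge f) nxt"
  have pN: "head_potential Hf edge f h \<le> N" if "h \<in> Hf" for h
    using fn[OF that] by (simp add: head_potential_def N_def)
  have "comm_group (ZN N)" by (rule ZN_comm_group) (simp add: N_def)
  moreover have "brauer_weighting (ZN N) V Hf vert m W"
    unfolding W_def by (rule potential_weighting_brauer) (use fin graph pN in \<open>auto simp: N_def\<close>)
  moreover have "cov_no_multiple_edges (ZN N) E Hf vert edge nxt W"
    unfolding W_def using head_potential_no_multiple_edges[OF bg assms(2) inj fn N_def] .
  ultimately show ?thesis by auto
qed

end
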